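(* Let $\mathcal{F}$ be an RKHS on $\mathcal{X}$ with kernel $k$ and feature map $\phi(x)=k(x,\cdot)$, and $\mathcal{U}$ an RKHS on $\mathcal{W}=\mathcal{Y}\times\mathcal{Z}$ with kernel $l$ and feature map $\varphi(w)=l(w,\cdot)$. Given an i.i.d. sample $(x_i,y_i,z_i)_{i=1}^n$ from $\mathbb{P}(X,Y,Z)$, set $w_i=(y_i,z_i)$, $\mathbf{y}=(y_1,\dots,y_n)^\top$, $\widehat{\mathcal{C}}_{XW}=\frac1n\sum_i\phi(x_i)\otimes\varphi(w_i)$, $\widehat{\mathcal{C}}_{WX}$ its adjoint, $\widehat{\mathcal{C}}_W=\frac1n\sum_i\varphi(w_i)\otimes\varphi(w_i)$, $\hat{\mathbf{b}}=\frac1n\sum_i y_i\varphi(w_i)$, and for $\lambda_1,\lambda_2>0$ let $$\hat f:=\big(\widehat{\mathcal{C}}_{XW}(\widehat{\mathcal{C}}_W+\lambda_1\mathcal{I})^{-1}\widehat{\mathcal{C}}_{WX}+\lambda_2\mathcal{I}\big)^{-1}\widehat{\mathcal{C}}_{XW}(\widehat{\mathcal{C}}_W+\lambda_1\mathcal{I})^{-1}\hat{\mathbf{b}}.$$ Let $\mathbf{K}_{ij}=k(x_i,x_j)$ and $\mathbf{L}_{ij}=l(w_i,w_j)$ be the Gram matrices and $\mathbf{M}:=\mathbf{K}(\mathbf{L}+n\lambda_1 I)^{-1}\mathbf{L}$, and assume $\mathbf{M}\mathbf{K}+n\lambda_2\mathbf{K}$ is invertible. Then $\hat f=\sum_{i=1}^n\beta_i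 k(x_i,\cdot)$ with $\boldsymbol\beta=(\mathbf{M}\mathbf{K}+n\lambda_2\mathbf{K})^{-1}\mathbf{M}\mathbf{y}$.
   Context: $\mathcal{I}$ denotes the identity operator; $(a\otimes b)u=\langle b,u\rangle a$. *)

theory Defs
  imports "HOL-Analysis.Analysis"
begin

definition tensor_op :: "'a::real_vector \<Rightarrow> 'b::real_inner \<Rightarrow> 'b \<Rightarrow> 'a" where
  "tensor_op a b = (\<lambda>u. inner b u *\<^sub>R a)"

definition emp_cov :: "('n::finite \<Rightarrow> 'a::real_vector) \<Rightarrow> ('n \<Rightarrow> 'b::real_inner) \<Rightarrow> 'b \<Rightarrow> 'a" where
  "emp_cov p q = (\<lambda>u. (1 / real CARD('n)) *\<^sub>R (\<Sum>i\<in>UNIV. tensor_op (p i) (q i) u))"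

definition gram :: "('a \<Rightarrow> 'a \<Rightarrow> real) \<Rightarrow> ('n::finite \<Rightarrow> 'a) \<Rightarrow> real^'n^'n" where
  "gram kern s = (\<chi> i j. kern (s i) (s j))"

end

(*
  Everything happens in the span of the features. On the span of the \<psi>(w\<^sub>i), C_W + \<lambda>\<^sub>1 I acts on
  coefficient vectors as (L + n\<lambda>\<^sub>1 I)/n, so its inverse there is explicit. For f = \<Sum> \<beta>\<^sub>i \<phi>(x\<^sub>i) the
  regularised operator therefore yields the coefficients (L A\<^sup>-\<^sup>1 K \<beta> + n\<lambda>\<^sub>2 \<beta>)/n, and the right-hand
  side the coefficients L A\<^sup>-\<^sup>1 y / n, where A = L + n\<lambda>\<^sub>1 I. Two coefficient vectors give the same
  element as soon as K maps them to the same vector, and multiplying by K (A\<^sup>-\<^sup>1 commutes with L)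
  turns the equation into (MK + n\<lambda>\<^sub>2 K) \<beta> = M y. The operator is injective, being a positive
  operator plus \<lambda>\<^sub>2 I, so f-hat = \<Sum> \<beta>\<^sub>i \<phi>(x\<^sub>i).
*)
theory Submission
  imports Defs
begin

definition lin_comb :: "('n::finite \<Rightarrow> 'a::real_vector) \<Rightarrow> real^'n \<Rightarrow> 'a" where
  "lin_comb p c = (\<Sum>i\<in>UNIV. c $ i *\<^sub>R p i)"

text \<open>For a feature map, \<open>sample_eval (\<lambda>i. \<phi> (x i)) f\<close> is the vector of values
  \<open>f (x\<^sub>i)\<close> by the reproducing property.\<close>
definition sample_eval :: "('n::finite \<Rightarrow> 'a::real_inner) \<Rightarrow> 'a \<Rightarrow> real^'n" where
  "sample_eval p f = (\<chi> i. inner (p i) f)"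

definition reg_cov :: "('n::finite \<Rightarrow> 'a::real_inner) \<Rightarrow> real \<Rightarrow> 'a \<Rightarrow> 'a" where
  "reg_cov q t u = emp_cov q q u + t *\<^sub>R u"

definition two_stage_op ::
    "('n::finite \<Rightarrow> 'a::real_inner) \<Rightarrow> ('n \<Rightarrow> 'b::real_inner) \<Rightarrow> real \<Rightarrow> real \<Rightarrow> 'a \<Rightarrow> 'a" where
  "two_stage_op p q t\<^sub>1 t\<^sub>2 f = emp_cov p q (inv (reg_cov q t\<^sub>1) (emp_cov q p f)) + t\<^sub>2 *\<^sub>R f"

lemma linear_lin_comb: "linear (lin_comb p)"
  by (rule linearI) (simp_all add: lin_comb_def algebra_simps sum.distrib scaleR_sum_right)

lemma sample_eval_lin_comb: "sample_eval p (lin_comb p c) = gram inner p *v c"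
  by (simp add: sample_eval_def lin_comb_def gram_def inner_sum_right matrix_vector_mult_def
      vec_eq_iff mult.commute)

lemma inner_lin_comb_left: "inner (lin_comb p c) f = c \<bullet> sample_eval p f"
  by (simp add: lin_comb_def sample_eval_def inner_sum_left inner_vec_def)

lemma gram_quadratic_form: "c \<bullet> (gram inner p *v c) = inner (lin_comb p c) (lin_comb p c)"
  by (simp add: inner_lin_comb_left sample_eval_lin_comb)

lemma gram_nonneg: "0 \<le> c \<bullet> (gram inner p *v c)"
  by (simp add: gram_quadratic_form)

lemma lin_comb_eq_if_gram_eq:
  assumes "gram inner p *v c = gram inner p *v d"
  shows "lin_comb p c = lin_comb p d"
proof -
  have "gram inner p *v (c - d) = 0"
    using assms by (simp add: matrix_vector_mult_diff_distrib)
  then have "inner (lin_comb p (c - d)) (lin_comb p (c - d)) = 0"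
    by (simp flip: gram_quadratic_form)
  then show ?thesis
    by (simp add: linear_diff[OF linear_lin_comb])
qed

lemma invertible_gram_plus_scaleR:
  assumes "t > 0"
  shows "invertible (gram inner p + t *\<^sub>R mat 1)"
proof -
  have "c = 0" if "(gram inner p + t *\<^sub>R mat 1) *v c = 0" for c
  proof -
    have "c \<bullet> (gram inner p *v c) + t * (c \<bullet> c) = 0"
      using arg_cong[OF that, of "inner c"]
      by (simp add: algebra_simps inner_add_right flip: scaleR_matrix_vector_assoc)
    with gram_nonneg[of c p] assms have "c \<bullet> c = 0"
      by (smt (verit) inner_ge_zero mult_pos_pos)
    then show "c = 0" by simp
  qed
  then have "inj ((*v) (gram inner p + t *\<^sub>R mat 1))"
    by (simp add: linear_injective_0)
  then show ?thesis
    using matrix_left_invertible_injective invertible_left_inverse by blast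
qed

lemma
  fixes A :: "'a::semiring_1^'n^'n"
  assumes "invertible A"
  shows matrix_inv_right: "A ** matrix_inv A = mat 1"
    and matrix_inv_left: "matrix_inv A ** A = mat 1"
  using someI_ex[OF assms[unfolded invertible_def]] unfolding matrix_inv_def by auto

lemma matrix_inv_commute:
  fixes A B :: "'a::semiring_1^'n^'n"
  assumes "A ** B = B ** A" and "invertible B"
  shows "A ** matrix_inv B = matrix_inv B ** A"
proof -
  have "A ** matrix_inv B = matrix_inv B ** (B ** A) ** matrix_inv B"
    by (simp add: matrix_mul_assoc matrix_inv_left[OF assms(2)])
  also have "\<dots> = matrix_inv B ** A ** (B ** matrix_inv B)"
    by (metis assms(1) matrix_mul_assoc)
  also have "\<dots> = matrix_inv B ** A"
    by (simp add: matrix_inv_right[OF assms(2)])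
  finally show ?thesis .
qed

lemma matrix_plus_scaleR_mat_1_commute:
  fixes A :: "real^'n^'n"
  shows "A ** (A + t *\<^sub>R mat 1) = (A + t *\<^sub>R mat 1) ** A"
proof -
  have "(A + t *\<^sub>R mat 1) ** A = A ** A + (t *\<^sub>R mat 1) ** A"
    by (vector matrix_matrix_mult_def sum.distrib distrib_right)
  then show ?thesis
    by (simp add: matrix_add_ldistrib matrix_scalar_ac flip: scalar_matrix_assoc)
qed

lemma emp_cov_eq_lin_comb:
  fixes p :: "'n::finite \<Rightarrow> 'a::real_vector"
  shows "emp_cov p q u = (1 / real CARD('n)) *\<^sub>R lin_comb p (sample_eval q u)"
  by (simp add: emp_cov_def tensor_op_def lin_comb_def sample_eval_def)

lemma linear_emp_cov: "linear (emp_cov p q)"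
  by (rule linearI)
    (simp_all add: emp_cov_def tensor_op_def inner_add_right add_divide_distrib scaleR_add_left
      sum.distrib scaleR_sum_right)

lemma inner_emp_cov_adjoint:
  fixes p :: "'n::finite \<Rightarrow> 'a::real_inner"
  shows "inner (emp_cov p q u) v = inner u (emp_cov q p v)"
proof -
  have "inner (emp_cov p q u) v = (sample_eval q u \<bullet> sample_eval p v) / real CARD('n)"
    by (simp add: emp_cov_eq_lin_comb inner_lin_comb_left)
  also have "\<dots> = (sample_eval p v \<bullet> sample_eval q u) / real CARD('n)"
    by (simp add: inner_commute)
  also have "\<dots> = inner (emp_cov q p v) u"
    by (simp add: emp_cov_eq_lin_comb inner_lin_comb_left)
  finally show ?thesis
    by (simp add: inner_commute)
qed

lemma inner_emp_cov_nonneg: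
  fixes p :: "'n::finite \<Rightarrow> 'a::real_inner"
  shows "0 \<le> inner u (emp_cov p p u)"
  by (simp add: inner_commute[of u] emp_cov_eq_lin_comb inner_lin_comb_left)

lemma inj_plus_scaleR_if_nonneg:
  fixes T :: "'a::real_inner \<Rightarrow> 'a"
  assumes "linear T" and "\<And>u. 0 \<le> inner u (T u)" and "t > 0"
  shows "inj (\<lambda>u. T u + t *\<^sub>R u)"
proof -
  have lin: "linear (\<lambda>u. T u + t *\<^sub>R u)"
    by (rule linear_compose_add[OF assms(1) linear_scaleR])
  have "u = 0" if "T u + t *\<^sub>R u = 0" for u
  proof -
    have "inner u (T u) + t * inner u u = 0"
      using arg_cong[OF that, of "inner u"] by (simp add: inner_add_right)
    with assms(2)[of u] assms(3) have "inner u u = 0"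
      by (smt (verit) inner_ge_zero mult_pos_pos)
    then show "u = 0" by simp
  qed
  then show ?thesis
    unfolding linear_injective_0[OF lin] by blast
qed

lemma linear_reg_cov: "linear (reg_cov q t)"
  unfolding reg_cov_def[abs_def] by (intro linear_compose_add linear_emp_cov linear_scaleR)

lemma inj_reg_cov: "t > 0 \<Longrightarrow> inj (reg_cov q t)"
  unfolding reg_cov_def
  by (rule inj_plus_scaleR_if_nonneg[OF linear_emp_cov inner_emp_cov_nonneg])

lemma reg_cov_lin_comb:
  fixes q :: "'n::finite \<Rightarrow> 'a::real_inner"
  defines "n \<equiv> real CARD('n)"
  shows "reg_cov q t (lin_comb q c)
    = (1 / n) *\<^sub>R lin_comb q ((gram inner q + (n * t) *\<^sub>R mat 1) *v c)"
proof -
  have "t *\<^sub>R lin_comb q c = (1 / n) *\<^sub>R lin_comb q ((n * t) *\<^sub>R c)"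
    by (simp add: linear_scale[OF linear_lin_comb] n_def)
  then show ?thesis
    by (simp add: reg_cov_def emp_cov_eq_lin_comb sample_eval_lin_comb n_def algebra_simps
        linear_add[OF linear_lin_comb] flip: scaleR_matrix_vector_assoc)
qed

lemma
  fixes q :: "'n::finite \<Rightarrow> 'a::real_inner"
  defines "n \<equiv> real CARD('n)"
  assumes "t > 0"
  shows lin_comb_in_range_reg_cov: "lin_comb q c \<in> range (reg_cov q t)"
    and inv_reg_cov_lin_comb:
      "inv (reg_cov q t) (lin_comb q c)
        = lin_comb q (matrix_inv (gram inner q + (n * t) *\<^sub>R mat 1) *v (n *\<^sub>R c))"
proof -
  let ?A = "gram inner q + (n * t) *\<^sub>R mat 1"
  have "invertible ?A"
    using assms by (simp add: invertible_gram_plus_scaleR n_def)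
  then have preimage: "reg_cov q t (lin_comb q (matrix_inv ?A *v (n *\<^sub>R c))) = lin_comb q c"
    by (simp add: reg_cov_lin_comb n_def matrix_vector_mul_assoc matrix_inv_right
        linear_scale[OF linear_lin_comb])
  then show "lin_comb q c \<in> range (reg_cov q t)"
    by (metis rangeI)
  show "inv (reg_cov q t) (lin_comb q c) = lin_comb q (matrix_inv ?A *v (n *\<^sub>R c))"
    by (metis preimage inv_f_f inj_reg_cov assms(2))
qed

lemma two_stage_op_lin_comb:
  fixes p :: "'n::finite \<Rightarrow> 'a::real_inner" and q :: "'n \<Rightarrow> 'b::real_inner" and t\<^sub>1 :: real
  defines "n \<equiv> real CARD('n)" and "K \<equiv> gram inner p" and "L \<equiv> gram inner q"
  defines "Ai \<equiv> matrix_inv (L + (n * t\<^sub>1) *\<^sub>R mat 1)"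
  assumes "t\<^sub>1 > 0"
  shows "two_stage_op p q t\<^sub>1 t\<^sub>2 (lin_comb p \<beta>)
    = (1 / n) *\<^sub>R lin_comb p ((L ** Ai ** K) *v \<beta> + (n * t\<^sub>2) *\<^sub>R \<beta>)"
proof -
  have "emp_cov q p (lin_comb p \<beta>) = lin_comb q ((1 / n) *\<^sub>R (K *v \<beta>))"
    by (simp add: emp_cov_eq_lin_comb sample_eval_lin_comb linear_scale[OF linear_lin_comb]
        K_def n_def)
  then have "inv (reg_cov q t\<^sub>1) (emp_cov q p (lin_comb p \<beta>)) = lin_comb q (Ai *v (K *v \<beta>))"
    using assms(5) by (simp add: inv_reg_cov_lin_comb Ai_def L_def n_def)
  then show ?thesis
    by (simp add: two_stage_op_def emp_cov_eq_lin_comb sample_eval_lin_comb L_def n_def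
        linear_add[OF linear_lin_comb] linear_scale[OF linear_lin_comb] matrix_vector_mul_assoc
        matrix_mul_assoc scaleR_add_right)
qed

text \<open>\<open>inv (reg_cov q t\<^sub>1)\<close> is a genuine inverse only on the range of \<open>reg_cov q t\<^sub>1\<close>;
  since that range contains the span of \<open>q\<close>, no surjectivity of \<open>reg_cov q t\<^sub>1\<close> on the whole
  (possibly infinite-dimensional) space is needed.\<close>
lemma inj_two_stage_op:
  fixes p :: "'n::finite \<Rightarrow> 'a::real_inner" and q :: "'n \<Rightarrow> 'b::real_inner"
  assumes "t\<^sub>1 > 0" and "t\<^sub>2 > 0"
  shows "inj (two_stage_op p q t\<^sub>1 t\<^sub>2)"
proof -
  let ?R = "inv (reg_cov q t\<^sub>1)"
  let ?T = "\<lambda>f. emp_cov p q (?R (emp_cov q p f))"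
  have in_range: "emp_cov q p f \<in> range (reg_cov q t\<^sub>1)" for f
    using assms(1) by (simp add: emp_cov_eq_lin_comb linear_scale[OF linear_lin_comb, symmetric]
        lin_comb_in_range_reg_cov)
  obtain g where "linear g" and g: "g \<circ> reg_cov q t\<^sub>1 = id"
    using linear_injective_left_inverse[OF linear_reg_cov inj_reg_cov[OF assms(1)]] by blast
  have "?R v = g v" if "v \<in> range (reg_cov q t\<^sub>1)" for v
    using that g inv_f_f[OF inj_reg_cov[OF assms(1)]] by (auto simp: fun_eq_iff)
  then have "?T = emp_cov p q \<circ> g \<circ> emp_cov q p"
    using in_range by auto
  then have "linear ?T"
    by (metis linear_compose linear_emp_cov \<open>linear g\<close>)
  moreover have "0 \<le> inner f (?T f)" for f
  proof -
    let ?u = "?R (emp_cov q p f)"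
    have "inner f (?T f) = inner ?u (reg_cov q t\<^sub>1 ?u)"
      by (simp add: inner_commute[of f] inner_emp_cov_adjoint f_inv_into_f[OF in_range])
    also have "\<dots> = inner ?u (emp_cov q q ?u) + t\<^sub>1 * inner ?u ?u"
      by (simp add: reg_cov_def inner_add_right)
    finally show ?thesis
      using inner_emp_cov_nonneg[of ?u q] assms(1) by simp
  qed
  moreover have "two_stage_op p q t\<^sub>1 t\<^sub>2 = (\<lambda>f. ?T f + t\<^sub>2 *\<^sub>R f)"
    by (simp add: fun_eq_iff two_stage_op_def)
  ultimately show ?thesis
    using inj_plus_scaleR_if_nonneg[of ?T, OF _ _ assms(2)] by simp
qed

lemma two_stage_solution:
  fixes p :: "'n::finite \<Rightarrow> 'a::real_inner" and q :: "'n \<Rightarrow> 'b::real_inner" and t\<^sub>1 :: real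
  defines "n \<equiv> real CARD('n)" and "K \<equiv> gram inner p" and "L \<equiv> gram inner q"
  defines "M \<equiv> K ** matrix_inv (L + (n * t\<^sub>1) *\<^sub>R mat 1) ** L"
  assumes "t\<^sub>1 > 0" and "t\<^sub>2 > 0" and invertible: "invertible (M ** K + (n * t\<^sub>2) *\<^sub>R K)"
  shows "inv (two_stage_op p q t\<^sub>1 t\<^sub>2)
      (emp_cov p q (inv (reg_cov q t\<^sub>1) ((1 / n) *\<^sub>R lin_comb q y)))
    = lin_comb p (matrix_inv (M ** K + (n * t\<^sub>2) *\<^sub>R K) *v (M *v y))"
proof -
  define Ai where "Ai = matrix_inv (L + (n * t\<^sub>1) *\<^sub>R mat 1)"
  define \<beta> where "\<beta> = matrix_inv (M ** K + (n * t\<^sub>2) *\<^sub>R K) *v (M *v y)"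
  have npos: "n > 0"
    by (simp add: n_def)
  have "L ** Ai = Ai ** L"
    using invertible_gram_plus_scaleR[of "n * t\<^sub>1" q] npos \<open>t\<^sub>1 > 0\<close>
    by (simp add: matrix_inv_commute matrix_plus_scaleR_mat_1_commute Ai_def L_def)
  then have M_eq: "K ** L ** Ai = M"
    by (metis M_def Ai_def matrix_mul_assoc)
  have rhs: "emp_cov p q (inv (reg_cov q t\<^sub>1) ((1 / n) *\<^sub>R lin_comb q y))
      = (1 / n) *\<^sub>R lin_comb p ((L ** Ai) *v y)"
    using npos \<open>t\<^sub>1 > 0\<close>
    by (simp add: linear_scale[OF linear_lin_comb, symmetric] inv_reg_cov_lin_comb
        emp_cov_eq_lin_comb sample_eval_lin_comb matrix_vector_mul_assoc Ai_def L_def n_def)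
  have "K *v ((L ** Ai ** K) *v \<beta> + (n * t\<^sub>2) *\<^sub>R \<beta>) = (M ** K + (n * t\<^sub>2) *\<^sub>R K) *v \<beta>"
    by (simp add: M_eq matrix_vector_right_distrib matrix_vector_mul_assoc matrix_mul_assoc
        matrix_vector_mult_add_rdistrib matrix_scaleR_vector_ac)
  also have "\<dots> = M *v y"
    by (simp add: \<beta>_def matrix_vector_mul_assoc matrix_mul_assoc matrix_inv_right[OF invertible])
  also have "\<dots> = K *v ((L ** Ai) *v y)"
    by (simp add: matrix_vector_mul_assoc matrix_mul_assoc flip: M_eq)
  finally have "lin_comb p ((L ** Ai ** K) *v \<beta> + (n * t\<^sub>2) *\<^sub>R \<beta>)
      = lin_comb p ((L ** Ai) *v y)"
    unfolding K_def by (rule lin_comb_eq_if_gram_eq)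
  then have "two_stage_op p q t\<^sub>1 t\<^sub>2 (lin_comb p \<beta>)
      = emp_cov p q (inv (reg_cov q t\<^sub>1) ((1 / n) *\<^sub>R lin_comb q y))"
    unfolding rhs using two_stage_op_lin_comb[OF \<open>t\<^sub>1 > 0\<close>, of p q t\<^sub>2 \<beta>]
    by (simp add: Ai_def L_def K_def n_def)
  then show ?thesis
    unfolding \<beta>_def[symmetric]
    using inv_f_f[OF inj_two_stage_op[OF \<open>t\<^sub>1 > 0\<close> \<open>t\<^sub>2 > 0\<close>]] by metis
qed

theorem proposition2:
  fixes \<phi> :: "'x \<Rightarrow> 'f::{real_inner, complete_space}"
    and \<psi> :: "real \<times> 'z \<Rightarrow> 'u::{real_inner, complete_space}"
    and k :: "'x \<Rightarrow> 'x \<Rightarrow> real"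
    and l :: "real \<times> 'z \<Rightarrow> real \<times> 'z \<Rightarrow> real"
    and x :: "'n::finite \<Rightarrow> 'x" and y :: "'n \<Rightarrow> real" and z :: "'n \<Rightarrow> 'z"
    and lam\<^sub>1 lam\<^sub>2 :: real
  assumes k_def: "\<And>a b. k a b = inner (\<phi> a) (\<phi> b)"
    and l_def: "\<And>a b. l a b = inner (\<psi> a) (\<psi> b)"
    and pos1: "lam\<^sub>1 > 0" and pos2: "lam\<^sub>2 > 0"
    and invM: "let n = real CARD('n); K = gram k x; L = gram l (\<lambda>i. (y i, z i));
              M = K ** matrix_inv (L + (n * lam\<^sub>1) *\<^sub>R mat 1) ** L
              in invertible (M ** K + (n * lam\<^sub>2) *\<^sub>R K)"
  shows "let n = real CARD('n); w = (\<lambda>i. (y i, z i));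
             C_XW = emp_cov (\<lambda>i. \<phi> (x i)) (\<lambda>i. \<psi> (w i));
             C_WX = emp_cov (\<lambda>i. \<psi> (w i)) (\<lambda>i. \<phi> (x i));
             C_W = emp_cov (\<lambda>i. \<psi> (w i)) (\<lambda>i. \<psi> (w i));
             b = (1 / n) *\<^sub>R (\<Sum>i\<in>UNIV. y i *\<^sub>R \<psi> (w i));
             R = inv (\<lambda>u. C_W u + lam\<^sub>1 *\<^sub>R id u);
             fhat = inv (\<lambda>f. C_XW (R (C_WX f)) + lam\<^sub>2 *\<^sub>R id f) (C_XW (R b));
             K = gram k x; L = gram l w;
             M = K ** matrix_inv (L + (n * lam\<^sub>1) *\<^sub>R mat 1) ** L;
             \<beta> = matrix_inv (M ** K + (n * lam\<^sub>2) *\<^sub>R K) *v (M *v (\<chi> i. y i))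
         in fhat = (\<Sum>i\<in>UNIV. (\<beta> $ i) *\<^sub>R \<phi> (x i))"
proof -
  let ?\<Phi> = "\<lambda>i. \<phi> (x i)" and ?\<Psi> = "\<lambda>i. \<psi> (y i, z i)"
  have grams: "gram k x = gram inner ?\<Phi>" "gram l (\<lambda>i. (y i, z i)) = gram inner ?\<Psi>"
    by (simp_all add: gram_def k_def l_def)
  have "(\<lambda>u. emp_cov ?\<Psi> ?\<Psi> u + lam\<^sub>1 *\<^sub>R id u) = reg_cov ?\<Psi> lam\<^sub>1"
    by (simp add: fun_eq_iff reg_cov_def)
  moreover have "(\<lambda>f. emp_cov ?\<Phi> ?\<Psi> (inv (reg_cov ?\<Psi> lam\<^sub>1) (emp_cov ?\<Psi> ?\<Phi> f)) + lam\<^sub>2 *\<^sub>R id f)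
      = two_stage_op ?\<Phi> ?\<Psi> lam\<^sub>1 lam\<^sub>2"
    by (simp add: fun_eq_iff two_stage_op_def)
  ultimately show ?thesis
    using two_stage_solution[OF pos1 pos2, of ?\<Phi> ?\<Psi> "\<chi> i. y i"] invM
    by (simp add: Let_def grams lin_comb_def)
qed

end
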